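(* Let $p$ be a prime, $\omega_1=e^{2\pi i/p}$, $F\in\mathbb Z[x]$, and $H(x)=\prod_{j=0}^{p-1}F(x\omega_1^j)$. Then $H(x)=g(x^p)$ for some $g\in\mathbb Z[x]$ with $g(x)\equiv F(x)\pmod p$, and $N_i(F)=N_{i-1}(g)$ for all $i\geq 2$, and $F(1)N_1(F)=g(1)$. If moreover $p=3$ and $F(x)=f_0(x^3)+xf_1(x^3)+x^2f_2(x^3)$ with $f_0,f_1,f_2\in\mathbb Z[x]$, then $g(x)=f_0(x)^3+xf_1(x)^3+x^2f_2(x)^3-3xf_0(x)f_1(x)f_2(x)$.
   Context: For $k\geq1$, $\omega_k=e^{2\pi i/p^k}$ and $N_k(F)=\prod_{1\leq \ell\leq p^k,\ p\nmid \ell}F(\omega_k^\ell)$. *)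

theory Defs
  imports "HOL-Analysis.Analysis" "HOL-Computational_Algebra.Polynomial"
begin

definition root_omega :: "nat \<Rightarrow> nat \<Rightarrow> complex" where
  "root_omega p k = exp (2 * pi * \<i> / of_nat (p ^ k))"

definition normN :: "nat \<Rightarrow> nat \<Rightarrow> int poly \<Rightarrow> complex" where
  "normN p k F = (\<Prod>l\<in>{l. 1 \<le> l \<and> l \<le> p ^ k \<and> \<not> p dvd l}.
      poly (map_poly of_int F) (root_omega p k ^ l))"

end

theory Submission
  imports Defs "HOL-Number_Theory.Cong"
begin

(* For integer F, H(x) = prod_{j<p} F(w^j x) with w = omega_1 is unchanged by x -> w x, so only the
   powers x^(p n) occur and H = G(x^p).  The coefficient of x^n in prod_{j<p} F(z^j x) is Q(z) for an
   integer polynomial Q.  The automorphisms w -> w^a permute the factors, so Q takes a single value q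
   at all primitive p-th roots of unity, and the twisted sum sum_{a<p} w^(-a) Q(w^a) = Q(1) - q is
   p times an integer.  Hence q is an integer congruent mod p to Q(1), the coefficient of x^n in
   F^p, and F^p == F(x^p) (mod p).  The norm identities come from evaluating g(z^p) = prod_j F(w^j z)
   at z = omega_i^l and regrouping the exponents l + j p^(i-1); for p = 3 the formula for g is the
   factorisation of a^3 + b^3 + c^3 - 3abc over the cube roots of unity. *)

section \<open>Integer polynomials and composition with powers of x\<close>

lemma map_poly_of_int_add:
  "map_poly (of_int :: int \<Rightarrow> 'a::comm_ring_1) (P + Q) = map_poly of_int P + map_poly of_int Q"
  by (intro poly_eqI) (simp add: coeff_map_poly)

lemma map_poly_of_int_diff:
  "map_poly (of_int :: int \<Rightarrow> 'a::comm_ring_1) (P - Q) = map_poly of_int P - map_poly of_int Q"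
  by (intro poly_eqI) (simp add: coeff_map_poly)

lemma map_poly_of_int_smult:
  "map_poly (of_int :: int \<Rightarrow> 'a::comm_ring_1) (smult c P) = smult (of_int c) (map_poly of_int P)"
  by (intro poly_eqI) (simp add: coeff_map_poly)

lemma map_poly_of_int_mult:
  "map_poly (of_int :: int \<Rightarrow> 'a::comm_ring_1) (P * Q) = map_poly of_int P * map_poly of_int Q"
  by (intro poly_eqI) (simp add: coeff_map_poly coeff_mult)

lemma map_poly_of_int_power:
  "map_poly (of_int :: int \<Rightarrow> 'a::comm_ring_1) (P ^ n) = map_poly of_int P ^ n"
  by (induction n) (simp_all add: map_poly_of_int_mult)

lemma map_poly_of_int_sum:
  "map_poly (of_int :: int \<Rightarrow> 'a::comm_ring_1) (sum f A) = (\<Sum>x\<in>A. map_poly of_int (f x))"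
  by (induction A rule: infinite_finite_induct) (simp_all add: map_poly_of_int_add)

lemma map_poly_of_int_monom:
  "map_poly (of_int :: int \<Rightarrow> 'a::comm_ring_1) (monom c n) = monom (of_int c) n"
  by (simp add: map_poly_monom)

lemma map_poly_of_int_pcompose:
  "map_poly (of_int :: int \<Rightarrow> 'a::comm_ring_1) (pcompose P Q) =
     pcompose (map_poly of_int P) (map_poly of_int Q)"
  by (induction P) (simp_all add: pcompose_pCons map_poly_of_int_add map_poly_of_int_mult map_poly_pCons)

lemma map_poly_of_int_inject:
  "map_poly (of_int :: int \<Rightarrow> 'a::ring_char_0) P = map_poly of_int Q \<longleftrightarrow> P = Q"
  by (auto simp: poly_eq_iff coeff_map_poly)

lemma poly_map_poly_of_int:
  "poly (map_poly (of_int :: int \<Rightarrow> 'a::comm_ring_1) P) (of_int x) = of_int (poly P x)"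
  by (induction P) (simp_all add: map_poly_pCons)

lemma poly_map_poly_of_int_1:
  "poly (map_poly (of_int :: int \<Rightarrow> 'a::comm_ring_1) P) 1 = of_int (poly P 1)"
  using poly_map_poly_of_int[of P 1] by simp

lemma coeff_pcompose_monom:
  fixes P :: "'a::comm_semiring_1 poly"
  assumes "k > 0"
  shows "coeff (pcompose P (monom 1 k)) m = (if k dvd m then coeff P (m div k) else 0)"
proof (induction P arbitrary: m)
  case (pCons a P)
  have "coeff (pcompose (pCons a P) (monom 1 k)) m =
      (if m = 0 then a else 0) + (if k \<le> m then coeff (pcompose P (monom 1 k)) (m - k) else 0)"
    by (simp add: pcompose_pCons coeff_monom_mult coeff_pCons split: nat.split)
  moreover have "k dvd (m - k) \<longleftrightarrow> k dvd m" "m div k = Suc ((m - k) div k)" if "k \<le> m"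
    using that assms by (auto simp: dvd_minus_self div_if)
  moreover have "\<not> k dvd m" if "0 < m" "m < k"
    using that by (auto dest: dvd_imp_le)
  ultimately show ?case
    using pCons.IH assms by (auto simp: coeff_pCons not_le)
qed simp

lemma pcompose_monom_1_left: "pcompose (monom (1::'a::comm_semiring_1) n) r = r ^ n"
  by (induction n) (simp_all add: monom_Suc pcompose_pCons monom_0 pcompose_1)

lemma pcompose_power: "pcompose ((P::'a::comm_semiring_1 poly) ^ n) r = pcompose P r ^ n"
  by (induction n) (simp_all add: pcompose_mult pcompose_1)

lemma pcompose_monom_inject:
  fixes P Q :: "'a::comm_semiring_1 poly"
  assumes "k > 0"
  shows "pcompose P (monom 1 k) = pcompose Q (monom 1 k) \<longleftrightarrow> P = Q"
proof
  assume "pcompose P (monom 1 k) = pcompose Q (monom 1 k)"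
  then have "coeff (pcompose P (monom 1 k)) (k * n) = coeff (pcompose Q (monom 1 k)) (k * n)" for n
    by simp
  with assms show "P = Q"
    by (simp add: poly_eq_iff coeff_pcompose_monom)
qed simp

lemma pcompose_monomE:
  fixes H :: "'a::comm_semiring_1 poly"
  assumes "k > 0" and "\<And>m. \<not> k dvd m \<Longrightarrow> coeff H m = 0"
  obtains G where "H = pcompose G (monom 1 k)" and "\<And>n. coeff G n = coeff H (k * n)"
proof
  define G where "G = Abs_poly (\<lambda>n. coeff H (k * n))"
  have "coeff H (k * i) = 0" if "i > degree H" for i
    using that assms(1) by (intro coeff_eq_0) (simp add: less_le_trans)
  then show coeff_G: "coeff G n = coeff H (k * n)" for n
    unfolding G_def by (subst coeff_Abs_poly[of "degree H"]) auto
  show "H = pcompose G (monom 1 k)"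
    using assms by (auto simp: poly_eq_iff coeff_pcompose_monom coeff_G)
qed

section \<open>Congruences modulo a prime\<close>

lemma prime_dvd_power_add_minus:
  fixes x y :: "'a::comm_ring_1"
  assumes "prime p"
  shows "of_nat p dvd (x + y) ^ p - x ^ p - y ^ p"
proof -
  have p: "p > 1"
    using assms by (rule prime_gt_1_nat)
  have "{..p} = insert 0 (insert p {1..<p})"
    using p by auto
  then have "(x + y) ^ p = y ^ p + (x ^ p + (\<Sum>k\<in>{1..<p}. of_nat (p choose k) * x ^ k * y ^ (p - k)))"
    using p by (simp add: binomial_ring)
  then have "(x + y) ^ p - x ^ p - y ^ p = (\<Sum>k\<in>{1..<p}. of_nat (p choose k) * x ^ k * y ^ (p - k))"
    by simp
  also have "of_nat p dvd \<dots>"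
  proof (intro dvd_sum dvd_mult2)
    fix k assume "k \<in> {1..<p}"
    then have "p dvd p choose k"
      using assms by (intro dvd_choose_prime) auto
    then show "of_nat p dvd (of_nat (p choose k) :: 'a)"
      by (auto elim!: dvdE)
  qed
  finally show ?thesis .
qed

lemma fermat_little_int:
  fixes a :: int
  assumes "prime p"
  shows "[a ^ p = a] (mod int p)"
proof -
  have nat_case: "[int n ^ p = int n] (mod int p)" for n
  proof (induction n)
    case 0
    show ?case
      using prime_gt_0_nat[OF assms] by (simp add: zero_power)
  next
    case (Suc n)
    have "int p dvd (int n + 1) ^ p - int n ^ p - 1 ^ p"
      using prime_dvd_power_add_minus[OF assms, of "int n" 1] by simp
    moreover have "int p dvd int n ^ p - int n"
      using Suc.IH by (simp add: cong_iff_dvd_diff)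
    ultimately have "int p dvd ((int n + 1) ^ p - int n ^ p - 1 ^ p) + (int n ^ p - int n)"
      by (rule dvd_add)
    then show ?case
      by (simp add: cong_iff_dvd_diff algebra_simps)
  qed
  define n where "n = nat (a mod int p)"
  have a_mod: "[a = int n] (mod int p)"
    using assms by (simp add: n_def cong_def prime_gt_0_nat)
  then have "[a ^ p = int n ^ p] (mod int p)"
    by (rule cong_pow)
  also have "[int n ^ p = int n] (mod int p)"
    by (rule nat_case)
  also have "[int n = a] (mod int p)"
    using a_mod by (rule cong_sym)
  finally show ?thesis .
qed

lemma frobenius_int_poly:
  fixes F :: "int poly"
  assumes "prime p"
  shows "of_nat p dvd F ^ p - pcompose F (monom 1 p)"
proof (induction F)
  case (pCons a F)
  define X :: "int poly" where "X = monom 1 1"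
  have "pCons a F = [:a:] + X * F"
    by (simp add: X_def poly_eq_iff coeff_pCons coeff_monom_mult split: nat.split)
  moreover have "pcompose (pCons a F) (monom 1 p) = [:a:] + X ^ p * pcompose F (monom 1 p)"
    by (simp add: X_def pcompose_pCons monom_power)
  ultimately have split: "pCons a F ^ p - pcompose (pCons a F) (monom 1 p) =
      (([:a:] + X * F) ^ p - [:a:] ^ p - (X * F) ^ p) + ([:a:] ^ p - [:a:])
      + X ^ p * (F ^ p - pcompose F (monom 1 p))"
    by (simp add: power_mult_distrib algebra_simps)
  have "of_nat p dvd [:a:] ^ p - [:a:]"
    using fermat_little_int[OF assms, of a]
    by (simp add: of_nat_poly poly_const_pow diff_to_poly cong_iff_dvd_diff)
  then show ?case
    unfolding split by (intro dvd_add dvd_mult prime_dvd_power_add_minus assms pCons.IH)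
qed (use prime_gt_0_nat[OF assms] in \<open>simp add: zero_power\<close>)

section \<open>Roots of unity\<close>

lemma root_omega_power_eq_1_iff:
  assumes "p > 0"
  shows "root_omega p k ^ m = 1 \<longleftrightarrow> p ^ k dvd m"
proof -
  have "root_omega p k ^ m = exp (of_nat m * (2 * pi * \<i> / of_nat (p ^ k)))"
    unfolding root_omega_def by (rule exp_of_nat_mult[symmetric])
  also have "of_nat m * (2 * pi * \<i> / of_nat (p ^ k)) =
      2 * of_real pi * \<i> * of_nat m / (of_nat (p ^ k) :: complex)"
    by simp
  finally show ?thesis
    using complex_root_unity_eq_1[of "p ^ k" m] assms by simp
qed

lemma root_omega_power_mod:
  assumes "p > 0"
  shows "root_omega p k ^ m = root_omega p k ^ (m mod p ^ k)"
proof -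
  have "root_omega p k ^ m =
      (root_omega p k ^ p ^ k) ^ (m div p ^ k) * root_omega p k ^ (m mod p ^ k)"
    by (simp flip: power_mult power_add add: mult.commute)
  also have "root_omega p k ^ p ^ k = 1"
    using assms by (simp add: root_omega_power_eq_1_iff)
  finally show ?thesis
    by simp
qed

lemma root_omega_power_prime_power:
  assumes "p > 0"
  shows "root_omega p (a + b) ^ (p ^ a) = root_omega p b"
proof -
  have "(of_nat (p ^ a) :: complex) * (2 * pi * \<i> / of_nat (p ^ (a + b))) =
      2 * pi * \<i> / of_nat (p ^ b)"
    using assms by (simp add: power_add field_simps)
  then show ?thesis
    unfolding root_omega_def by (simp flip: exp_of_nat_mult)
qed

lemma sum_root_omega_powers:
  assumes "p > 0"
  shows "(\<Sum>a<p. root_omega p 1 ^ (a * m)) = (if p dvd m then of_nat p else 0)"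
proof -
  define z where "z = root_omega p 1 ^ m"
  have "z ^ p = 1"
    using assms by (simp add: z_def root_omega_power_eq_1_iff flip: power_mult)
  moreover have "z = 1 \<longleftrightarrow> p dvd m"
    using assms by (simp add: z_def root_omega_power_eq_1_iff)
  moreover have "(\<Sum>a<p. root_omega p 1 ^ (a * m)) = (\<Sum>a<p. z ^ a)"
    by (simp add: z_def mult.commute flip: power_mult)
  ultimately show ?thesis
    by (auto simp: geometric_sum)
qed

lemma prod_root_omega_affine_reindex:
  fixes T :: "complex \<Rightarrow> 'b::comm_monoid_mult"
  assumes "p > 0" and "coprime a p"
  shows "(\<Prod>j<p. T (root_omega p 1 ^ (a * j + b))) = (\<Prod>j<p. T (root_omega p 1 ^ j))"
proof -
  define h where "h j = (a * j + b) mod p" for j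
  have inj: "inj_on h {..<p}"
  proof (rule inj_onI)
    fix x y assume "x \<in> {..<p}" "y \<in> {..<p}" "h x = h y"
    moreover from \<open>h x = h y\<close> have "[a * x + b = a * y + b] (mod p)"
      by (simp add: h_def cong_def)
    then have "[x = y] (mod p)"
      using assms(2) by (simp add: cong_add_rcancel_nat cong_mult_lcancel_nat)
    ultimately show "x = y"
      by (simp add: cong_def)
  qed
  have "h ` {..<p} = {..<p}"
    using assms(1) by (intro endo_inj_surj inj) (auto simp: h_def)
  have "(\<Prod>j<p. T (root_omega p 1 ^ (a * j + b))) = (\<Prod>j<p. T (root_omega p 1 ^ h j))"
    using root_omega_power_mod[OF assms(1), of 1] by (simp add: h_def)
  also have "\<dots> = (\<Prod>j\<in>h ` {..<p}. T (root_omega p 1 ^ j))"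
    using inj by (simp add: prod.reindex)
  also have "\<dots> = (\<Prod>j<p. T (root_omega p 1 ^ j))"
    using \<open>h ` {..<p} = {..<p}\<close> by simp
  finally show ?thesis .
qed

section \<open>The product of the rescaled copies of a polynomial\<close>

definition scaled_prod :: "nat \<Rightarrow> 'a \<Rightarrow> 'a poly \<Rightarrow> 'a::comm_ring_1 poly" where
  "scaled_prod k z P = (\<Prod>j<k. pcompose P [:0, z ^ j:])"

lemma poly_scaled_prod: "poly (scaled_prod k z P) x = (\<Prod>j<k. poly P (z ^ j * x))"
  by (simp add: scaled_prod_def poly_prod poly_pcompose mult.commute)

lemma scaled_prod_Suc: "scaled_prod (Suc k) z P = scaled_prod k z P * pcompose P [:0, z ^ k:]"
  by (simp add: scaled_prod_def)

lemma scaled_prod_1: "scaled_prod k 1 P = P ^ k"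
  by (simp add: scaled_prod_def)

lemma coeff_scaled_prod_int_poly:
  fixes F :: "int poly"
  shows "\<exists>Q :: int poly. \<forall>z :: 'a::comm_ring_1.
           coeff (scaled_prod k z (map_poly of_int F)) n = poly (map_poly of_int Q) z"
proof (induction k arbitrary: n)
  case 0
  show ?case
    by (intro exI[of _ "[:if n = 0 then 1 else 0:]"]) (simp add: scaled_prod_def map_poly_pCons)
next
  case (Suc k)
  from Suc.IH obtain Q where Q: "\<And>i z. coeff (scaled_prod k z (map_poly of_int F)) i =
      poly (map_poly (of_int :: int \<Rightarrow> 'a) (Q i)) z"
    by metis
  have "coeff (scaled_prod (Suc k) z (map_poly of_int F)) n =
      poly (map_poly of_int (\<Sum>i\<le>n. Q i * monom (coeff F (n - i)) (k * (n - i)))) z"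
    for z :: 'a
    by (simp add: scaled_prod_Suc coeff_mult Q coeff_pcompose_linear coeff_map_poly
        map_poly_of_int_sum map_poly_of_int_mult map_poly_of_int_monom poly_sum poly_monom
        power_mult mult_ac)
  then show ?case
    by blast
qed

lemma pcompose_scaled_prod_root_omega:
  assumes "p > 0"
  shows "pcompose (scaled_prod p (root_omega p 1) P) [:0, root_omega p 1:] =
           scaled_prod p (root_omega p 1) P"
proof -
  have "pcompose [:0, c:] [:0, d:] = [:0, c * d:]" for c d :: complex
    by (simp add: pcompose_pCons)
  then have "pcompose (scaled_prod p (root_omega p 1) P) [:0, root_omega p 1:] =
      (\<Prod>j<p. pcompose P [:0, root_omega p 1 ^ (1 * j + 1):])"
    by (simp add: scaled_prod_def pcompose_prod mult.commute flip: pcompose_assoc)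
  also have "\<dots> = scaled_prod p (root_omega p 1) P"
    unfolding scaled_prod_def
    by (rule prod_root_omega_affine_reindex[OF assms, where T = "\<lambda>c. pcompose P [:0, c:]"]) simp
  finally show ?thesis .
qed

lemma coeff_scaled_prod_root_omega_eq_0:
  assumes "p > 0" and "\<not> p dvd n"
  shows "coeff (scaled_prod p (root_omega p 1) P) n = 0"
proof -
  let ?c = "coeff (scaled_prod p (root_omega p 1) P) n"
  have "?c = coeff (pcompose (scaled_prod p (root_omega p 1) P) [:0, root_omega p 1:]) n"
    by (simp only: pcompose_scaled_prod_root_omega[OF assms(1)])
  also have "\<dots> = root_omega p 1 ^ n * ?c"
    by (rule coeff_pcompose_linear)
  finally have "?c = root_omega p 1 ^ n * ?c" .
  moreover have "root_omega p 1 ^ n \<noteq> 1"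
    using assms by (simp add: root_omega_power_eq_1_iff)
  ultimately show ?thesis
    by (simp add: mult_cancel_right1)
qed

lemma scaled_prod_root_omega_power:
  assumes "prime p" and "a \<in> {1..<p}"
  shows "scaled_prod p (root_omega p 1 ^ a) P = scaled_prod p (root_omega p 1) P"
proof -
  have "\<not> p dvd a"
    using assms(2) by (auto dest: dvd_imp_le)
  then have "coprime a p"
    using assms(1) coprime_commute prime_imp_coprime by blast
  then show ?thesis
    unfolding scaled_prod_def power_mult[symmetric]
    using prod_root_omega_affine_reindex[OF prime_gt_0_nat[OF assms(1)], of a _ 0] by simp
qed

lemma int_poly_constant_on_root_omega_powers:
  fixes Q :: "int poly"
  assumes "prime p" and "\<And>a. a \<in> {1..<p} \<Longrightarrow> poly (map_poly of_int Q) (root_omega p 1 ^ a) = q"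
  shows "\<exists>k::int. q = of_int k \<and> [k = poly Q 1] (mod int p)"
proof -
  define w where "w = root_omega p 1"
  define r where "r = p - 1"
  define S where "S = (\<Sum>i\<le>degree Q. if p dvd i + r then coeff Q i else 0)"
  have p: "p > 1"
    using assms(1) by (rule prime_gt_1_nat)
  have lessThan_p: "{..<p} = insert 0 {1..<p}"
    using p by auto
  \<comment> \<open>\<open>w ^ (a * r) = w ^ (-a)\<close> selects the coefficients of the exponents \<open>i \<equiv> 1 (mod p)\<close>\<close>
  have "(\<Sum>a<p. w ^ (a * r) * poly (map_poly of_int Q) (w ^ a)) =
      (\<Sum>a<p. \<Sum>i\<le>degree Q. of_int (coeff Q i) * w ^ (a * (i + r)))"
    by (simp add: poly_altdef degree_map_poly coeff_map_poly sum_distrib_left distrib_left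
        power_add power_mult mult_ac)
  also have "\<dots> = (\<Sum>i\<le>degree Q. of_int (coeff Q i) * (\<Sum>a<p. w ^ (a * (i + r))))"
    by (subst sum.swap) (simp add: sum_distrib_left)
  also have "\<dots> = (\<Sum>i\<le>degree Q. of_int (coeff Q i) * (if p dvd i + r then of_nat p else 0))"
    unfolding w_def using p by (simp only: sum_root_omega_powers)
  also have "\<dots> = of_nat p * of_int S"
    by (simp add: S_def sum_distrib_left of_int_sum if_distrib mult_ac cong: if_cong)
  finally have twisted_sum: "(\<Sum>a<p. w ^ (a * r) * poly (map_poly of_int Q) (w ^ a)) =
      of_nat p * of_int S" .
  have "\<not> p dvd r"
    using p by (auto simp: r_def dest: dvd_imp_le)
  then have "(\<Sum>a<p. w ^ (a * r)) = 0"
    using sum_root_omega_powers[of p r] p by (simp add: w_def)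
  then have "(\<Sum>a\<in>{1..<p}. w ^ (a * r)) = -1"
    unfolding lessThan_p by (simp add: eq_neg_iff_add_eq_0 add.commute)
  then have "(\<Sum>a<p. w ^ (a * r) * poly (map_poly of_int Q) (w ^ a)) = of_int (poly Q 1) - q"
    unfolding lessThan_p using assms(2)
    by (simp add: w_def poly_map_poly_of_int_1 flip: sum_distrib_right)
  with twisted_sum have "q = of_int (poly Q 1 - int p * S)"
    by (simp add: algebra_simps)
  moreover have "[poly Q 1 - int p * S = poly Q 1] (mod int p)"
    by (simp add: cong_iff_dvd_diff)
  ultimately show ?thesis
    by blast
qed

lemma coeff_scaled_prod_root_omega_int:
  fixes F :: "int poly"
  assumes "prime p"
  shows "\<exists>k::int. coeff (scaled_prod p (root_omega p 1) (map_poly of_int F)) n = of_int k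
           \<and> [k = coeff (F ^ p) n] (mod int p)"
proof -
  obtain Q :: "int poly" where Q: "\<And>z::complex.
      coeff (scaled_prod p z (map_poly of_int F)) n = poly (map_poly of_int Q) z"
    using coeff_scaled_prod_int_poly by blast
  have "(of_int (poly Q 1) :: complex) = poly (map_poly of_int Q) 1"
    by (rule poly_map_poly_of_int_1[symmetric])
  also have "\<dots> = coeff (scaled_prod p 1 (map_poly of_int F)) n"
    by (rule Q[symmetric])
  also have "\<dots> = of_int (coeff (F ^ p) n)"
    by (simp add: scaled_prod_1 coeff_map_poly flip: map_poly_of_int_power)
  finally have Q_1: "poly Q 1 = coeff (F ^ p) n"
    by simp
  have "poly (map_poly of_int Q) (root_omega p 1 ^ a) =
      coeff (scaled_prod p (root_omega p 1) (map_poly of_int F)) n" if "a \<in> {1..<p}" for a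
    using scaled_prod_root_omega_power[OF assms that] by (simp flip: Q)
  with Q_1 show ?thesis
    using int_poly_constant_on_root_omega_powers[OF assms] by metis
qed

lemma scaled_prod_root_omega_int_poly:
  fixes F :: "int poly"
  assumes "prime p"
  obtains g :: "int poly"
  where "scaled_prod p (root_omega p 1) (map_poly of_int F) =
           pcompose (map_poly of_int g) (monom 1 p)"
    and "\<And>n. [coeff g n = coeff F n] (mod int p)"
proof -
  let ?H = "scaled_prod p (root_omega p 1) (map_poly of_int F)"
  have p: "p > 0"
    using assms by (rule prime_gt_0_nat)
  obtain G where HG: "?H = pcompose G (monom 1 p)"
    and coeff_G: "\<And>n. coeff G n = coeff ?H (p * n)"
    using pcompose_monomE[OF p coeff_scaled_prod_root_omega_eq_0[OF p]] by blast
  have "\<exists>k. coeff G n = of_int k \<and> [k = coeff F n] (mod int p)" for n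
  proof -
    obtain k where k: "coeff ?H (p * n) = of_int k" "[k = coeff (F ^ p) (p * n)] (mod int p)"
      using coeff_scaled_prod_root_omega_int[OF assms] by blast
    obtain C where "F ^ p - pcompose F (monom 1 p) = of_nat p * C"
      using frobenius_int_poly[OF assms] by (rule dvdE)
    then have "coeff (F ^ p) (p * n) = coeff F n + int p * coeff C (p * n)"
      using p by (simp add: of_nat_poly coeff_pcompose_monom algebra_simps flip: eq_diff_eq)
    then have "[coeff (F ^ p) (p * n) = coeff F n] (mod int p)"
      by (simp add: cong_iff_dvd_diff)
    with k show ?thesis
      by (auto simp: coeff_G intro: cong_trans)
  qed
  then obtain c where c: "\<And>n. coeff G n = of_int (c n)" "\<And>n. [c n = coeff F n] (mod int p)"
    by metis
  then obtain g where g: "G = map_poly of_int g"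
    by (metis Ints_of_int intpolyE)
  show thesis
  proof
    show "?H = pcompose (map_poly of_int g) (monom 1 p)"
      using HG g by simp
    show "[coeff g n = coeff F n] (mod int p)" for n
      using c[of n] g by (simp add: coeff_map_poly)
  qed
qed

section \<open>Norms\<close>

lemma poly_power_if_scaled_prod_eq_pcompose:
  assumes "scaled_prod k z P = pcompose G (monom 1 k)"
  shows "poly G (x ^ k) = (\<Prod>j<k. poly P (z ^ j * x))"
  using arg_cong[OF assms, of "\<lambda>H. poly H x"]
  by (simp add: poly_scaled_prod poly_pcompose poly_monom)

lemma normN_eq_prod_lessThan:
  assumes "k > 0"
  shows "normN p k F =
           (\<Prod>l\<in>{l. l < p ^ k \<and> \<not> p dvd l}. poly (map_poly of_int F) (root_omega p k ^ l))"
proof -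
  have "p dvd p ^ k"
    using assms by (simp add: dvd_power)
  then have "1 \<le> l \<and> l \<le> p ^ k \<longleftrightarrow> l < p ^ k" if "\<not> p dvd l" for l
    using that by (cases "l = 0"; cases "l = p ^ k") auto
  then have "{l. 1 \<le> l \<and> l \<le> p ^ k \<and> \<not> p dvd l} = {l. l < p ^ k \<and> \<not> p dvd l}"
    by blast
  then show ?thesis
    by (simp add: normN_def)
qed

lemma bij_betw_non_multiples_add_mult:
  fixes p q :: nat
  assumes "p dvd q" and "q > 0"
  shows "bij_betw (\<lambda>(l, j). l + j * q) ({l. l < q \<and> \<not> p dvd l} \<times> {..<p})
           {m. m < q * p \<and> \<not> p dvd m}"
proof (rule bij_betw_byWitness[where f' = "\<lambda>m. (m mod q, m div q)"])
  have "l + j * q < q * p \<and> \<not> p dvd l + j * q" if "l < q" "\<not> p dvd l" "j < p" for l j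
  proof
    have "(j + 1) * q \<le> p * q"
      using that(3) by (intro mult_le_mono1) simp
    then show "l + j * q < q * p"
      using that(1) by (simp add: algebra_simps)
    show "\<not> p dvd l + j * q"
      using that(2) assms(1) by (simp add: dvd_add_left_iff)
  qed
  then show "(\<lambda>(l, j). l + j * q) ` ({l. l < q \<and> \<not> p dvd l} \<times> {..<p}) \<subseteq>
      {m. m < q * p \<and> \<not> p dvd m}"
    by auto
  have "m mod q < q \<and> \<not> p dvd m mod q \<and> m div q < p" if "m < q * p" "\<not> p dvd m" for m
    using that assms by (simp add: dvd_mod_iff less_mult_imp_div_less mult.commute)
  then show "(\<lambda>m. (m mod q, m div q)) ` {m. m < q * p \<and> \<not> p dvd m} \<subseteq>
      {l. l < q \<and> \<not> p dvd l} \<times> {..<p}"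
    by auto
qed auto

lemma normN_Suc_eq_normN:
  fixes F g :: "int poly"
  assumes "prime p" and "k > 0"
    and H: "scaled_prod p (root_omega p 1) (map_poly of_int F) =
            pcompose (map_poly of_int g) (monom 1 p)"
  shows "normN p (Suc k) F = normN p k g"
proof -
  have p: "p > 0"
    using assms(1) by (rule prime_gt_0_nat)
  define q where "q = p ^ k"
  define w where "w = root_omega p (Suc k)"
  define Fw where "Fw m = poly (map_poly (of_int :: int \<Rightarrow> complex) F) (w ^ m)" for m
  have w_q: "w ^ q = root_omega p 1"
    using root_omega_power_prime_power[OF p, of k 1] by (simp add: w_def q_def)
  have w_p: "w ^ p = root_omega p k"
    using root_omega_power_prime_power[OF p, of 1 k] by (simp add: w_def)
  have g_value: "poly (map_poly of_int g) (root_omega p k ^ l) = (\<Prod>j<p. Fw (l + j * q))" for l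
  proof -
    have "root_omega p k ^ l = (w ^ l) ^ p"
      by (metis w_p power_mult mult.commute)
    moreover have "root_omega p 1 ^ j * w ^ l = w ^ (l + j * q)" for j
      unfolding w_q[symmetric] by (simp add: power_add mult.commute flip: power_mult)
    ultimately show ?thesis
      by (simp add: poly_power_if_scaled_prod_eq_pcompose[OF H] Fw_def)
  qed
  have "normN p k g = (\<Prod>l\<in>{l. l < q \<and> \<not> p dvd l}. \<Prod>j<p. Fw (l + j * q))"
    using assms(2) by (simp add: normN_eq_prod_lessThan g_value q_def)
  also have "\<dots> = (\<Prod>(l, j)\<in>{l. l < q \<and> \<not> p dvd l} \<times> {..<p}. Fw (l + j * q))"
    by (rule prod.cartesian_product)
  also have "\<dots> = (\<Prod>m\<in>{m. m < q * p \<and> \<not> p dvd m}. Fw m)"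
    using prod.reindex_bij_betw[OF bij_betw_non_multiples_add_mult, of p q Fw] assms(2) p
    by (simp add: q_def split_def)
  also have "\<dots> = normN p (Suc k) F"
    by (simp add: normN_eq_prod_lessThan Fw_def w_def q_def mult.commute)
  finally show ?thesis ..
qed

lemma poly_1_mult_normN_1:
  fixes F g :: "int poly"
  assumes "prime p"
    and H: "scaled_prod p (root_omega p 1) (map_poly of_int F) =
            pcompose (map_poly of_int g) (monom 1 p)"
  shows "of_int (poly F 1) * normN p 1 F = of_int (poly g 1)"
proof -
  have "{..<p} = insert 0 {l. l < p \<and> \<not> p dvd l}"
    using prime_gt_0_nat[OF assms(1)] by (auto dest: dvd_imp_le)
  then have "(\<Prod>j<p. poly (map_poly of_int F) (root_omega p 1 ^ j)) =
      of_int (poly F 1) * normN p 1 F"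
    by (simp add: normN_eq_prod_lessThan poly_map_poly_of_int_1)
  moreover have "poly (map_poly of_int g) (1 ^ p) =
      (\<Prod>j<p. poly (map_poly of_int F) (root_omega p 1 ^ j))"
    using poly_power_if_scaled_prod_eq_pcompose[OF H, of 1] by simp
  ultimately show ?thesis
    by (simp add: poly_map_poly_of_int_1)
qed

section \<open>The cubic case\<close>

lemma norm_form_cube_roots_of_unity:
  fixes w a b c :: "'a::idom"
  assumes "1 + w + w ^ 2 = 0"
  shows "(\<Prod>j<3. a + w ^ j * b + (w ^ j) ^ 2 * c) = a ^ 3 + b ^ 3 + c ^ 3 - 3 * a * b * c"
proof -
  have "(\<Prod>j<3. a + w ^ j * b + (w ^ j) ^ 2 * c) =
      (a + b + c) * (a + w * b + w ^ 2 * c) * (a + w ^ 2 * b + (w ^ 2) ^ 2 * c)"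
    by (simp add: numeral_3_eq_3 power2_eq_square mult_ac)
  also have "\<dots> = a ^ 3 + b ^ 3 + c ^ 3 - 3 * a * b * c"
    using assms by algebra
  finally show ?thesis .
qed

lemma pcompose_pcompose_monom_scale:
  fixes P :: "'a::comm_ring_1 poly"
  assumes "c ^ k = 1"
  shows "pcompose (pcompose P (monom 1 k)) [:0, c:] = pcompose P (monom 1 k)"
proof -
  have "pcompose (monom 1 k) [:0, c:] = monom (c ^ k) k"
    by (simp add: pcompose_monom_1_left monom_power flip: monom_Suc monom_0)
  then show ?thesis
    using assms by (simp flip: pcompose_assoc)
qed

lemma scaled_prod_3_cube_decomposition:
  fixes f0 f1 f2 :: "int poly"
  defines "F \<equiv> pcompose f0 (monom 1 3) + monom 1 1 * pcompose f1 (monom 1 3)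
                   + monom 1 2 * pcompose f2 (monom 1 3)"
  shows "scaled_prod 3 (root_omega 3 1) (map_poly of_int F) =
    pcompose (map_poly of_int (f0 ^ 3 + monom 1 1 * f1 ^ 3 + monom 1 2 * f2 ^ 3
                   - smult 3 (monom 1 1 * f0 * f1 * f2))) (monom 1 3)"
proof -
  define w where "w = root_omega 3 1"
  define X :: "complex poly" where "X = monom 1 1"
  define A where "A = pcompose (map_poly of_int f0) (X ^ 3)"
  define B where "B = pcompose (map_poly of_int f1) (X ^ 3)"
  define C where "C = pcompose (map_poly of_int f2) (X ^ 3)"
  have monom_X: "monom 1 n = X ^ n" for n
    by (simp add: X_def monom_power)
  have pcompose_X: "pcompose X Q = Q" for Q
    using pcompose_monom_1_left[of 1 Q] by (simp add: X_def)
  have w_cube: "(w ^ j) ^ 3 = 1" for j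
    using root_omega_power_eq_1_iff[of 3 1 "3 * j"]
    by (simp add: w_def mult.commute flip: power_mult)
  have "1 + w + w ^ 2 = 0"
    using sum_root_omega_powers[of 3 1] by (simp add: w_def numeral_3_eq_3 power2_eq_square)
  then have w_const: "1 + [:w:] + [:w:] ^ 2 = 0"
    by (simp add: poly_const_pow one_pCons)
  have F_decomp: "map_poly of_int F = A + X * B + X ^ 2 * C"
    by (simp add: F_def A_def B_def C_def map_poly_of_int_add map_poly_of_int_mult
        map_poly_of_int_pcompose map_poly_of_int_monom monom_X)
  have "pcompose (map_poly of_int F) [:0, w ^ j:] =
      A + [:w:] ^ j * (X * B) + ([:w:] ^ j) ^ 2 * (X ^ 2 * C)" for j
  proof -
    have "pcompose X [:0, w ^ j:] = [:w:] ^ j * X"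
      by (simp add: X_def monom_Suc monom_0 pcompose_pCons poly_const_pow)
    moreover have "pcompose (pcompose P (X ^ 3)) [:0, w ^ j:] = pcompose P (X ^ 3)" for P
      using pcompose_pcompose_monom_scale[OF w_cube[of j], of P] by (simp add: monom_X)
    ultimately show ?thesis
      by (simp add: F_decomp A_def B_def C_def pcompose_add pcompose_mult pcompose_power
          power_mult_distrib mult_ac)
  qed
  then have "scaled_prod 3 w (map_poly of_int F) =
      (\<Prod>j<3. A + [:w:] ^ j * (X * B) + ([:w:] ^ j) ^ 2 * (X ^ 2 * C))"
    by (simp add: scaled_prod_def)
  also have "\<dots> = A ^ 3 + (X * B) ^ 3 + (X ^ 2 * C) ^ 3 - 3 * A * (X * B) * (X ^ 2 * C)"
    using w_const by (rule norm_form_cube_roots_of_unity)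
  also have "\<dots> = pcompose (map_poly of_int (f0 ^ 3 + monom 1 1 * f1 ^ 3 + monom 1 2 * f2 ^ 3
                   - smult 3 (monom 1 1 * f0 * f1 * f2))) (monom 1 3)"
    by (simp add: A_def B_def C_def monom_X map_poly_of_int_add map_poly_of_int_diff
        map_poly_of_int_mult map_poly_of_int_power map_poly_of_int_smult map_poly_of_int_monom
        pcompose_add pcompose_diff pcompose_mult pcompose_power pcompose_smult
        pcompose_monom_1_left numeral_mult_conv_smult)
      (simp add: pcompose_X eval_nat_numeral algebra_simps)
  finally show ?thesis
    by (simp add: w_def)
qed

theorem lemma2p4:
  fixes p :: nat and F :: "int poly" and H :: "complex poly"
  assumes "prime p"
    and H_def: "H = (\<Prod>j<p. pcompose (map_poly of_int F) [:0, root_omega p 1 ^ j:])"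
  shows "\<exists>g :: int poly.
           H = pcompose (map_poly of_int g) (monom 1 p)
         \<and> (\<forall>n. coeff g n mod int p = coeff F n mod int p)
         \<and> (\<forall>i\<ge>2. normN p i F = normN p (i - 1) g)
         \<and> of_int (poly F 1) * normN p 1 F = of_int (poly g 1)
         \<and> (p = 3 \<longrightarrow> (\<forall>f0 f1 f2 :: int poly.
               F = pcompose f0 (monom 1 3) + monom 1 1 * pcompose f1 (monom 1 3)
                   + monom 1 2 * pcompose f2 (monom 1 3) \<longrightarrow>
               g = f0 ^ 3 + monom 1 1 * f1 ^ 3 + monom 1 2 * f2 ^ 3
                   - smult 3 (monom 1 1 * f0 * f1 * f2)))"
proof -
  have H_scaled: "H = scaled_prod p (root_omega p 1) (map_poly of_int F)"
    by (simp add: H_def scaled_prod_def)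
  obtain g where Hg: "scaled_prod p (root_omega p 1) (map_poly of_int F) =
                      pcompose (map_poly of_int g) (monom 1 p)"
    and g_cong: "\<And>n. [coeff g n = coeff F n] (mod int p)"
    using scaled_prod_root_omega_int_poly[OF assms(1)] by blast
  have "normN p i F = normN p (i - 1) g" if "i \<ge> 2" for i
    using normN_Suc_eq_normN[OF assms(1) _ Hg, of "i - 1"] that by (simp add: Suc_diff_Suc)
  moreover have
    "g = f0 ^ 3 + monom 1 1 * f1 ^ 3 + monom 1 2 * f2 ^ 3 - smult 3 (monom 1 1 * f0 * f1 * f2)"
    if "p = 3" and "F = pcompose f0 (monom 1 3) + monom 1 1 * pcompose f1 (monom 1 3)
                   + monom 1 2 * pcompose f2 (monom 1 3)" for f0 f1 f2
    using Hg scaled_prod_3_cube_decomposition[of f0 f1 f2] that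
    by (simp add: pcompose_monom_inject map_poly_of_int_inject)
  ultimately show ?thesis
    using H_scaled Hg g_cong poly_1_mult_normN_1[OF assms(1) Hg] unfolding cong_def by blast
qed

end
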